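(* Let $v\ge2$, $n\ge1$, $\epsilon>0$. Let $(Q,\hat P_n)$ and $(Q',\hat P_n')$ be block design schemes with parameters $(v,b,r,k,\lambda,\epsilon)$ and $(v,b',r',k',\lambda',\epsilon)$, respectively. Then the two schemes are marginally equivalent if and only if $k=k'$.
   Context: $\mathcal{X}=\{1,\dots,v\}$; $\Delta_v$ is the set of probability vectors on $\mathcal{X}$. For an incidence structure $(\mathcal{X},\mathcal{Y},\mathcal{I})$ ($\mathcal{I}\subset\mathcal{X}\times\mathcal{Y}$) write $\mathcal{I}_x=\{y:(x,y)\in\mathcal{I}\}$, $\mathcal{I}^y=\{x:(x,y)\in\mathcal{I}\}$. For integers $v>k>0$, $b>r>\lambda\ge0$, a $(v,b,r,k,\lambda)$-block design is an incidence structure with $|\mathcal{X}|=v$, $|\mathcal{Y}|=b$, $|\mathcal{I}_x|=r$ for all $x$, $|\mathcal{I}^y|=k$ for all $y$, $|\mathcal{I}_x\cap\mathcal{I}_{x'}|=\lambda$ for all $x\neq x'$. A block design scheme with parameters $(v,b,r,k,\lambda,\epsilon)$ consists of a $(v,b,r,k,\lambda)$-block design, the mechanism $Q(y|x)=\alpha e^\epsilon$ if $(x,y)\in\mathcal{I}$ and $\alpha$ otherwise, with $\alpha=1/(re^\epsilon+b-r)$, and the estimator $\hat P_{n,x}(Y_1,\dots,Y_n)=\frac{1}{(r-\lambda)(e^\epsilon-1)}\left(\frac{N_x}{n\alpha}-(\lambda e^\epsilon+r-\lambda)\right)$, $N_x=\sum_{i=1}^n\mathbb{1}(Y_i\in\mathcal{I}_x)$.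 Two schemes $(Q,\hat P_n)$, $(Q',\hat P_n')$ (mechanisms with inputs in $\mathcal{X}$) are marginally equivalent if, whenever $X_1,\dots,X_n$ are i.i.d. $\sim P$ and $Y_i\sim Q(\cdot|X_i)$, $Y_i'\sim Q'(\cdot|X_i)$, one has $\hat P_{n,x}(Y_1,\dots,Y_n)\overset{d}{=}\hat P'_{n,x}(Y_1',\dots,Y_n')$ for every $x\in\mathcal{X}$ and every $P\in\Delta_v$. *)

theory Defs
  imports "HOL-Probability.Probability"
begin

definition inc_row :: "('x \<times> 'y) set \<Rightarrow> 'x \<Rightarrow> 'y set" where
  "inc_row I x = {y. (x, y) \<in> I}"

definition inc_col :: "('x \<times> 'y) set \<Rightarrow> 'y \<Rightarrow> 'x set" where
  "inc_col I y = {x. (x, y) \<in> I}"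

definition block_design ::
  "nat \<Rightarrow> nat \<Rightarrow> nat \<Rightarrow> nat \<Rightarrow> nat \<Rightarrow> 'y set \<Rightarrow> (nat \<times> 'y) set \<Rightarrow> bool" where
  "block_design v b r k lam Y I \<longleftrightarrow>
     v > k \<and> k > 0 \<and> b > r \<and> r > lam \<and>
     finite Y \<and> card Y = b \<and> I \<subseteq> {1..v} \<times> Y \<and>
     (\<forall>x\<in>{1..v}. card (inc_row I x) = r) \<and>
     (\<forall>y\<in>Y. card (inc_col I y) = k) \<and>
     (\<forall>x\<in>{1..v}. \<forall>x'\<in>{1..v}. x \<noteq> x' \<longrightarrow> card (inc_row I x \<inter> inc_row I x') = lam)"

definition bd_alpha :: "nat \<Rightarrow> nat \<Rightarrow> real \<Rightarrow> real" where
  "bd_alpha b r eps = 1 / (real r * exp eps + real b - real r)"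

definition bd_mech :: "'y set \<Rightarrow> (nat \<times> 'y) set \<Rightarrow> nat \<Rightarrow> nat \<Rightarrow> real \<Rightarrow> nat \<Rightarrow> 'y pmf" where
  "bd_mech Y I b r eps x =
     embed_pmf (\<lambda>y. if y \<in> Y then (if (x, y) \<in> I then bd_alpha b r eps * exp eps
                                    else bd_alpha b r eps) else 0)"

definition bd_est :: "(nat \<times> 'y) set \<Rightarrow> nat \<Rightarrow> nat \<Rightarrow> nat \<Rightarrow> real \<Rightarrow> nat \<Rightarrow> nat \<Rightarrow> 'y list \<Rightarrow> real" where
  "bd_est I b r lam eps n x ys =
     (1 / ((real r - real lam) * (exp eps - 1))) *
     (real (length (filter (\<lambda>y. y \<in> inc_row I x) ys)) / (real n * bd_alpha b r eps)
        - (real lam * exp eps + real r - real lam))"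

fun iid_list :: "nat \<Rightarrow> 'a pmf \<Rightarrow> 'a list pmf" where
  "iid_list 0 p = return_pmf []"
| "iid_list (Suc n) p = bind_pmf p (\<lambda>a. map_pmf (\<lambda>as. a # as) (iid_list n p))"

definition output_dist :: "nat \<Rightarrow> nat pmf \<Rightarrow> (nat \<Rightarrow> 'y pmf) \<Rightarrow> 'y list pmf" where
  "output_dist n P Q =
     map_pmf (map snd) (iid_list n (bind_pmf P (\<lambda>x. map_pmf (\<lambda>y. (x, y)) (Q x))))"

definition marg_equiv ::
  "nat \<Rightarrow> nat \<Rightarrow> (nat \<Rightarrow> 'y pmf) \<Rightarrow> (nat \<Rightarrow> 'y list \<Rightarrow> real)
       \<Rightarrow> (nat \<Rightarrow> 'z pmf) \<Rightarrow> (nat \<Rightarrow> 'z list \<Rightarrow> real) \<Rightarrow> bool" where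
  "marg_equiv v n Q E Q' E' \<longleftrightarrow>
     (\<forall>P :: nat pmf. set_pmf P \<subseteq> {1..v} \<longrightarrow>
        (\<forall>x\<in>{1..v}. map_pmf (E x) (output_dist n P Q) = map_pmf (E' x) (output_dist n P Q')))"

end

theory Submission
  imports Defs
begin

(* The count N_x is a sum of n i.i.d. indicators of the event Y_i \<in> I_x, whose probability is
   C + D P(x) with C = bd_offset and D = bd_slope; so the estimator is the affine image
   (N_x/n - C)/D of a Binomial(n, C + D P(x)) variable.  The counting identities b k = v r and
   lambda (v - 1) = r (k - 1) make C and D functions of v, k and eps alone, which gives one
   direction.  Conversely, for a point mass P the least value of the estimator is -C/D, and
   C/D + 1 = e^eps (v - 1) / ((e^eps - 1)(v - k)) determines k. *)

lemma iid_list_eq_replicate_pmf: "iid_list n p = replicate_pmf n p"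
  by (induction n) (simp_all add: map_pmf_def)

lemma replicate_pmf_Suc_eq_bind_map:
  "replicate_pmf (Suc n) p = bind_pmf p (\<lambda>x. map_pmf (Cons x) (replicate_pmf n p))"
  by (simp add: map_pmf_def)

lemma map_replicate_pmf: "map_pmf (map f) (replicate_pmf n p) = replicate_pmf n (map_pmf f p)"
proof (induction n)
  case (Suc n)
  show ?case
    unfolding replicate_pmf_Suc_eq_bind_map
    by (simp add: map_bind_pmf bind_map_pmf map_pmf_comp flip: Suc.IH)
qed simp

lemma map_pmf_mem_eq_bernoulli_pmf:
  "map_pmf (\<lambda>a. a \<in> A) p = bernoulli_pmf (measure_pmf.prob p A)"
proof (rule pmf_eqI)
  fix b :: bool
  have "(\<lambda>a. a \<in> A) -` {True} = A" "(\<lambda>a. a \<in> A) -` {False} = - A"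
    by auto
  then show "pmf (map_pmf (\<lambda>a. a \<in> A) p) b = pmf (bernoulli_pmf (measure_pmf.prob p A)) b"
    using measure_pmf.prob_compl[of A p] by (cases b) (simp_all add: pmf_map Compl_eq_Diff_UNIV)
qed

lemma count_replicate_pmf_eq_binomial_pmf:
  "map_pmf (\<lambda>ys. length (filter (\<lambda>y. y \<in> A) ys)) (replicate_pmf n p)
     = binomial_pmf n (measure_pmf.prob p A)"
proof -
  have "map_pmf (\<lambda>ys. length (filter (\<lambda>y. y \<in> A) ys)) (replicate_pmf n p)
      = map_pmf (length \<circ> filter id) (map_pmf (map (\<lambda>y. y \<in> A)) (replicate_pmf n p))"
    by (simp add: map_pmf_comp filter_map o_def)
  then show ?thesis
    by (simp add: map_replicate_pmf map_pmf_mem_eq_bernoulli_pmf binomial_pmf_altdef)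
qed

lemma output_dist_eq_replicate_pmf: "output_dist n P Q = replicate_pmf n (bind_pmf P Q)"
  unfolding output_dist_def iid_list_eq_replicate_pmf map_replicate_pmf
  by (simp add: map_bind_pmf map_pmf_comp)

lemma measure_bind_pmf:
  "measure_pmf.prob (bind_pmf P Q) A = (\<integral>x. measure_pmf.prob (Q x) A \<partial>measure_pmf P)"
proof -
  have "(\<lambda>x. measure_pmf (Q x)) \<in> measurable (measure_pmf P) (subprob_algebra (count_space UNIV))"
    by (auto simp: space_subprob_algebra intro!: measure_pmf.subprob_space_axioms)
  then show ?thesis
    unfolding measure_pmf_bind by (simp add: measure_pmf.measure_bind)
qed

lemma Inf_set_pmf_map_affine:
  fixes C D :: real and M :: "nat pmf"
  assumes "0 \<in> set_pmf M" and "D > 0"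
  shows "Inf (set_pmf (map_pmf (\<lambda>j. (real j / real n - C) / D) M)) = - C / D"
proof (rule cInf_eq_minimum)
  show "- C / D \<in> set_pmf (map_pmf (\<lambda>j. (real j / real n - C) / D) M)"
    using assms(1) by force
  have "- C / D \<le> (real j / real n - C) / D" for j :: nat
    using assms(2) by (intro divide_right_mono) simp_all
  then show "- C / D \<le> z" if "z \<in> set_pmf (map_pmf (\<lambda>j. (real j / real n - C) / D) M)" for z
    using that by auto
qed

lemma eq_div_of_affine_binomial_pmf_eq:
  fixes C D C' D' q q' :: real
  assumes "map_pmf (\<lambda>j. (real j / real n - C) / D) (binomial_pmf n q)
         = map_pmf (\<lambda>j. (real j / real n - C') / D') (binomial_pmf n q')"
    and "q \<in> {0<..<1}" and "q' \<in> {0<..<1}" and "D > 0" and "D' > 0"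
  shows "C / D = C' / D'"
proof -
  have "- C / D = - C' / D'"
    using Inf_set_pmf_map_affine[of "binomial_pmf n q" D n C]
      Inf_set_pmf_map_affine[of "binomial_pmf n q'" D' n C'] assms
    by simp
  then show ?thesis
    by simp
qed

lemma sum_card_swap_restrict:
  assumes "finite A" and "finite B"
  shows "(\<Sum>x\<in>A. card {y \<in> B. R x y}) = (\<Sum>y\<in>B. card {x \<in> A. R x y})"
  using sum.swap_restrict[OF assms, of "\<lambda>_ _. 1 :: nat" R] by simp

lemma block_design_params:
  assumes "block_design v b r k lam Y I"
  shows "k < v" "0 < k" "r < b" "lam < r"
  using assms unfolding block_design_def by simp_all

lemma block_design_blocks:
  assumes "block_design v b r k lam Y I"
  shows "finite Y" "card Y = b"
  using assms unfolding block_design_def by simp_all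

lemma block_design_card_inc_row:
  assumes "block_design v b r k lam Y I" and "x \<in> {1..v}"
  shows "card (inc_row I x) = r"
  using assms unfolding block_design_def by blast

lemma block_design_card_inc_col:
  assumes "block_design v b r k lam Y I" and "y \<in> Y"
  shows "card (inc_col I y) = k"
  using assms unfolding block_design_def by blast

lemma block_design_card_inc_row_Int:
  assumes "block_design v b r k lam Y I" and "x \<in> {1..v}" and "x' \<in> {1..v}" and "x \<noteq> x'"
  shows "card (inc_row I x \<inter> inc_row I x') = lam"
  using assms unfolding block_design_def by blast

lemma block_design_inc_row_eq:
  assumes "block_design v b r k lam Y I"
  shows "inc_row I x = {y \<in> Y. (x, y) \<in> I}"
  using assms unfolding block_design_def inc_row_def by blast

lemma block_design_inc_col_eq:
  assumes "block_design v b r k lam Y I"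
  shows "inc_col I y = {x \<in> {1..v}. (x, y) \<in> I}"
  using assms unfolding block_design_def inc_col_def by blast

lemma block_design_b_mult_k:
  assumes bd: "block_design v b r k lam Y I"
  shows "b * k = v * r"
proof -
  have "v * r = (\<Sum>x\<in>{1..v}. card (inc_row I x))"
    using block_design_card_inc_row[OF bd] by simp
  also have "\<dots> = (\<Sum>y\<in>Y. card (inc_col I y))"
    unfolding block_design_inc_row_eq[OF bd] block_design_inc_col_eq[OF bd]
    using block_design_blocks(1)[OF bd] by (intro sum_card_swap_restrict) simp_all
  also have "\<dots> = b * k"
    using block_design_blocks(2)[OF bd] block_design_card_inc_col[OF bd] by simp
  finally show ?thesis
    by simp
qed

lemma block_design_lam_mult:
  assumes bd: "block_design v b r k lam Y I"
  shows "lam * (v - 1) = r * (k - 1)"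
proof -
  have one: "1 \<in> {1..v}"
    using block_design_params(1)[OF bd] by simp
  have "lam * (v - 1) = (\<Sum>x\<in>{1..v} - {1}. card (inc_row I 1 \<inter> inc_row I x))"
    using block_design_card_inc_row_Int[OF bd one] one by simp
  also have "\<dots> = (\<Sum>y\<in>inc_row I 1. card {x \<in> {1..v} - {1}. y \<in> inc_row I x})"
    unfolding Int_def using block_design_blocks(1)[OF bd]
    by (intro sum_card_swap_restrict) (simp_all add: block_design_inc_row_eq[OF bd])
  also have "\<dots> = (\<Sum>y\<in>inc_row I 1. card (inc_col I y - {1}))"
    by (intro sum.cong arg_cong[where f = card]) (auto simp: block_design_inc_col_eq[OF bd] inc_row_def)
  also have "\<dots> = r * (k - 1)"
    using block_design_card_inc_row[OF bd one] block_design_card_inc_col[OF bd]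
    by (simp add: block_design_inc_row_eq[OF bd] inc_col_def)
  finally show ?thesis .
qed

lemma block_design_r_minus_lam:
  assumes bd: "block_design v b r k lam Y I"
  shows "real r - real lam = real r * (real v - real k) / (real v - 1)"
proof -
  note params = block_design_params[OF bd]
  have "real (lam * (v - 1)) = real (r * (k - 1))"
    using block_design_lam_mult[OF bd] by simp
  then have lam_eq: "real lam * (real v - 1) = real r * (real k - 1)"
    using params(1,2) by (simp add: of_nat_diff)
  have "(real r - real lam) * (real v - 1) = real r * (real v - 1) - real lam * (real v - 1)"
    by (simp add: algebra_simps)
  also have "\<dots> = real r * (real v - real k)"
    unfolding lam_eq by (simp add: algebra_simps)
  finally show ?thesis
    using params(1,2) by (simp add: eq_divide_eq)
qed

definition bd_offset :: "nat \<Rightarrow> nat \<Rightarrow> nat \<Rightarrow> real \<Rightarrow> real" where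
  "bd_offset b r lam eps = bd_alpha b r eps * (real lam * exp eps + real r - real lam)"

definition bd_slope :: "nat \<Rightarrow> nat \<Rightarrow> nat \<Rightarrow> real \<Rightarrow> real" where
  "bd_slope b r lam eps = bd_alpha b r eps * (real r - real lam) * (exp eps - 1)"

lemma bd_alpha_pos:
  assumes "r < b"
  shows "0 < bd_alpha b r eps"
proof -
  have "0 \<le> real r * exp eps" and "real r < real b"
    using assms by simp_all
  then have "0 < real r * exp eps + real b - real r"
    by linarith
  then show ?thesis
    unfolding bd_alpha_def by simp
qed

lemma pmf_bd_mech:
  assumes bd: "block_design v b r k lam Y I" and x: "x \<in> {1..v}"
  shows "pmf (bd_mech Y I b r eps x) y =
    (if y \<in> Y then if (x, y) \<in> I then bd_alpha b r eps * exp eps else bd_alpha b r eps else 0)"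
    (is "_ = ?f y")
proof -
  let ?a = "bd_alpha b r eps"
  note blocks = block_design_blocks[OF bd]
  have "r < b"
    using block_design_params(3)[OF bd] .
  then have a_pos: "0 < ?a"
    by (rule bd_alpha_pos)
  then have nonneg: "0 \<le> ?f y" for y
    by simp
  have card_row: "card {y \<in> Y. (x, y) \<in> I} = r"
    using block_design_card_inc_row[OF bd x] by (simp add: block_design_inc_row_eq[OF bd])
  have card_not_row: "card {y \<in> Y. (x, y) \<notin> I} = b - r"
  proof -
    have "{y \<in> Y. (x, y) \<notin> I} = Y - {y \<in> Y. (x, y) \<in> I}"
      by blast
    then show ?thesis
      using card_row blocks by (simp add: card_Diff_subset)
  qed
  have "(\<Sum>y\<in>Y. ?f y) = ?a * exp eps * r + ?a * (b - r)"
    using card_row card_not_row blocks(1) by (simp add: sum.If_cases Int_def)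
  also have "\<dots> = ?a * (real r * exp eps + real b - real r)"
    using \<open>r < b\<close> by (simp add: algebra_simps of_nat_diff)
  also have "\<dots> = 1"
    using a_pos unfolding bd_alpha_def by simp
  finally have sum_one: "(\<Sum>y\<in>Y. ?f y) = 1" .
  have "(\<integral>\<^sup>+y. ennreal (?f y) \<partial>count_space UNIV) = (\<Sum>y\<in>Y. ennreal (?f y))"
    using blocks(1) by (intro nn_integral_count_space') auto
  also have "\<dots> = ennreal (\<Sum>y\<in>Y. ?f y)"
    using nonneg by (rule sum_ennreal)
  also have "\<dots> = 1"
    using sum_one by simp
  finally show ?thesis
    unfolding bd_mech_def using nonneg by (subst pmf_embed_pmf) simp_all
qed

lemma measure_bd_mech_inc_row:
  assumes bd: "block_design v b r k lam Y I" and x: "x \<in> {1..v}" and x': "x' \<in> {1..v}"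
  shows "measure_pmf.prob (bd_mech Y I b r eps x') (inc_row I x)
       = bd_offset b r lam eps + bd_slope b r lam eps * indicator {x} x'"
proof -
  let ?a = "bd_alpha b r eps"
  have fin: "finite (inc_row I x)"
    using block_design_blocks(1)[OF bd] by (simp add: block_design_inc_row_eq[OF bd])
  have "measure_pmf.prob (bd_mech Y I b r eps x') (inc_row I x)
      = (\<Sum>y\<in>inc_row I x. if y \<in> inc_row I x' then ?a * exp eps else ?a)"
    unfolding measure_measure_pmf_finite[OF fin]
    by (intro sum.cong) (auto simp: pmf_bd_mech[OF bd x'] block_design_inc_row_eq[OF bd])
  also have "\<dots> = ?a * exp eps * card (inc_row I x \<inter> inc_row I x')
                   + ?a * card (inc_row I x - inc_row I x')"
    using fin by (simp add: sum.If_cases Int_def Diff_eq)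
  also have "\<dots> = bd_offset b r lam eps + bd_slope b r lam eps * indicator {x} x'"
  proof (cases "x' = x")
    case True
    then show ?thesis
      using block_design_card_inc_row[OF bd x]
      unfolding bd_offset_def bd_slope_def by (simp add: algebra_simps)
  next
    case False
    have card_Int: "card (inc_row I x \<inter> inc_row I x') = lam"
      using block_design_card_inc_row_Int[OF bd x x'] False by simp
    then have "card (inc_row I x - inc_row I x') = r - lam"
      using block_design_card_inc_row[OF bd x] fin by (simp add: card_Diff_subset_Int)
    then show ?thesis
      using False card_Int block_design_params(4)[OF bd]
      unfolding bd_offset_def bd_slope_def by (simp add: algebra_simps of_nat_diff)
  qed
  finally show ?thesis .
qed

lemma measure_bind_bd_mech_inc_row:
  assumes bd: "block_design v b r k lam Y I" and x: "x \<in> {1..v}" and P: "set_pmf P \<subseteq> {1..v}"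
  shows "measure_pmf.prob (bind_pmf P (bd_mech Y I b r eps)) (inc_row I x)
       = bd_offset b r lam eps + bd_slope b r lam eps * pmf P x"
proof -
  let ?C = "bd_offset b r lam eps" and ?D = "bd_slope b r lam eps"
  have "measure_pmf.prob (bind_pmf P (bd_mech Y I b r eps)) (inc_row I x)
      = (\<integral>x'. ?C + ?D * indicator {x} x' \<partial>measure_pmf P)"
    unfolding measure_bind_pmf using P
    by (intro integral_cong_AE) (auto simp: AE_measure_pmf_iff measure_bd_mech_inc_row[OF bd x])
  also have "\<dots> = ?C + ?D * measure_pmf.prob P {x}"
    by (subst Bochner_Integration.integral_add)
      (auto intro!: integrable_mult_right measure_pmf.integrable_const_bound[where B = 1])
  finally show ?thesis
    by (simp add: measure_pmf_single)
qed

lemma bd_est_eq: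
  assumes "r < b" and "n \<noteq> 0"
  shows "bd_est I b r lam eps n x ys
       = (real (length (filter (\<lambda>y. y \<in> inc_row I x) ys)) / real n - bd_offset b r lam eps)
           / bd_slope b r lam eps"
  using bd_alpha_pos[OF assms(1), of eps] assms(2)
  unfolding bd_est_def bd_offset_def bd_slope_def by (simp add: field_simps)

lemma distr_bd_est:
  assumes bd: "block_design v b r k lam Y I" and x: "x \<in> {1..v}" and P: "set_pmf P \<subseteq> {1..v}"
    and n: "n \<noteq> 0"
  shows "map_pmf (bd_est I b r lam eps n x) (output_dist n P (bd_mech Y I b r eps))
     = map_pmf (\<lambda>j. (real j / real n - bd_offset b r lam eps) / bd_slope b r lam eps)
         (binomial_pmf n (bd_offset b r lam eps + bd_slope b r lam eps * pmf P x))"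
  unfolding bd_est_eq[OF block_design_params(3)[OF bd] n, abs_def] output_dist_eq_replicate_pmf
    measure_bind_bd_mech_inc_row[OF bd x P, symmetric] count_replicate_pmf_eq_binomial_pmf[symmetric]
  by (simp add: map_pmf_comp)

lemma bd_offset_add_slope: "bd_offset b r lam eps + bd_slope b r lam eps = bd_alpha b r eps * real r * exp eps"
  unfolding bd_offset_def bd_slope_def by (simp add: algebra_simps)

lemma block_design_denom_pos:
  assumes "block_design v b r k lam Y I"
  shows "0 < real k * (exp eps - 1) + real v"
proof -
  have "0 < real k * exp eps" and "real k < real v"
    using block_design_params(1,2)[OF assms] by simp_all
  then show ?thesis
    by (simp add: algebra_simps)
qed

lemma block_design_alpha_mult_r:
  assumes bd: "block_design v b r k lam Y I"
  shows "bd_alpha b r eps * real r = real k / (real k * (exp eps - 1) + real v)"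
proof -
  have "real b * real k = real v * real r"
    using block_design_b_mult_k[OF bd] by (metis of_nat_mult)
  moreover have "0 < real r * exp eps + real b - real r"
    using bd_alpha_pos[OF block_design_params(3)[OF bd], of eps] unfolding bd_alpha_def by simp
  moreover have "0 < real k * (exp eps - 1) + real v"
    using block_design_denom_pos[OF bd] .
  ultimately show ?thesis
    unfolding bd_alpha_def by (simp add: field_simps)
qed

lemma bd_offset_add_slope_eq:
  assumes "block_design v b r k lam Y I"
  shows "bd_offset b r lam eps + bd_slope b r lam eps
       = real k * exp eps / (real k * (exp eps - 1) + real v)"
  unfolding bd_offset_add_slope block_design_alpha_mult_r[OF assms] by simp

lemma bd_slope_eq:
  assumes "block_design v b r k lam Y I"
  shows "bd_slope b r lam eps
       = real k * (exp eps - 1) * (real v - real k) / ((real v - 1) * (real k * (exp eps - 1) + real v))"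
proof -
  have "bd_slope b r lam eps = bd_alpha b r eps * real r * (real v - real k) / (real v - 1) * (exp eps - 1)"
    unfolding bd_slope_def block_design_r_minus_lam[OF assms] by simp
  then show ?thesis
    unfolding block_design_alpha_mult_r[OF assms] by (simp add: mult_ac)
qed

lemma bd_offset_bd_slope_eq_of_same_k:
  assumes bd: "block_design v b r k lam Y I" and bd': "block_design v b' r' k lam' Y' I'"
  shows "bd_offset b r lam eps = bd_offset b' r' lam' eps" "bd_slope b r lam eps = bd_slope b' r' lam' eps"
proof -
  show slope: "bd_slope b r lam eps = bd_slope b' r' lam' eps"
    unfolding bd_slope_eq[OF bd] bd_slope_eq[OF bd'] ..
  have "bd_offset b r lam eps + bd_slope b r lam eps = bd_offset b' r' lam' eps + bd_slope b' r' lam' eps"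
    unfolding bd_offset_add_slope_eq[OF bd] bd_offset_add_slope_eq[OF bd'] ..
  with slope show "bd_offset b r lam eps = bd_offset b' r' lam' eps"
    by simp
qed

lemma bd_offset_add_slope_bounds:
  assumes bd: "block_design v b r k lam Y I"
  shows "bd_offset b r lam eps + bd_slope b r lam eps \<in> {0<..<1}"
proof -
  have "0 < real k * exp eps" and "real k < real v"
    using block_design_params(1,2)[OF bd] by simp_all
  then show ?thesis
    unfolding bd_offset_add_slope_eq[OF bd] by (simp add: algebra_simps)
qed

lemma bd_slope_pos:
  assumes bd: "block_design v b r k lam Y I" and "eps > 0"
  shows "0 < bd_slope b r lam eps"
  using bd_alpha_pos[OF block_design_params(3)[OF bd]] block_design_params(4)[OF bd] assms(2)
  unfolding bd_slope_def by simp

lemma bd_offset_div_slope: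
  assumes bd: "block_design v b r k lam Y I" and "eps > 0"
  shows "bd_offset b r lam eps / bd_slope b r lam eps
       = exp eps * (real v - 1) / ((exp eps - 1) * (real v - real k)) - 1"
proof -
  have "bd_alpha b r eps \<noteq> 0" "real r \<noteq> 0" "exp eps - 1 \<noteq> 0" "real v - 1 \<noteq> 0" "real v - real k \<noteq> 0"
    using bd_alpha_pos[OF block_design_params(3)[OF bd], of eps] block_design_params[OF bd] \<open>eps > 0\<close>
    by simp_all
  then have "(bd_offset b r lam eps + bd_slope b r lam eps) / bd_slope b r lam eps
      = exp eps * (real v - 1) / ((exp eps - 1) * (real v - real k))"
    unfolding bd_offset_add_slope unfolding bd_slope_def block_design_r_minus_lam[OF bd]
    by (simp add: divide_simps)
  moreover have "bd_slope b r lam eps \<noteq> 0"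
    using bd_slope_pos[OF assms] by simp
  ultimately show ?thesis
    by (simp add: add_divide_distrib eq_diff_eq)
qed

theorem theorem2:
  fixes v n b r k lam b' r' k' lam' :: nat and eps :: real
    and Y :: "'y set" and I :: "(nat \<times> 'y) set"
    and Y' :: "'z set" and I' :: "(nat \<times> 'z) set"
  assumes "v \<ge> 2" and "n \<ge> 1" and "eps > 0"
    and "block_design v b r k lam Y I"
    and "block_design v b' r' k' lam' Y' I'"
  shows "marg_equiv v n (bd_mech Y I b r eps) (bd_est I b r lam eps n)
                        (bd_mech Y' I' b' r' eps) (bd_est I' b' r' lam' eps n)
         \<longleftrightarrow> k = k'"
proof
  note bd = assms(4) and bd' = assms(5)
  assume "k = k'"
  then show "marg_equiv v n (bd_mech Y I b r eps) (bd_est I b r lam eps n)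
                        (bd_mech Y' I' b' r' eps) (bd_est I' b' r' lam' eps n)"
    unfolding marg_equiv_def using bd_offset_bd_slope_eq_of_same_k[OF bd, of b' r' lam' Y' I'] bd'
      distr_bd_est[OF bd] distr_bd_est[OF bd'] assms(2)
    by simp
next
  note bd = assms(4) and bd' = assms(5)
  assume "marg_equiv v n (bd_mech Y I b r eps) (bd_est I b r lam eps n)
                        (bd_mech Y' I' b' r' eps) (bd_est I' b' r' lam' eps n)"
  then have "map_pmf (bd_est I b r lam eps n 1) (output_dist n (return_pmf 1) (bd_mech Y I b r eps))
      = map_pmf (bd_est I' b' r' lam' eps n 1) (output_dist n (return_pmf 1) (bd_mech Y' I' b' r' eps))"
    unfolding marg_equiv_def using assms(1) by simp
  then have "bd_offset b r lam eps / bd_slope b r lam eps = bd_offset b' r' lam' eps / bd_slope b' r' lam' eps"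
    using assms(1,2) bd_offset_add_slope_bounds[OF bd] bd_offset_add_slope_bounds[OF bd']
      bd_slope_pos[OF bd assms(3)] bd_slope_pos[OF bd' assms(3)]
    by (intro eq_div_of_affine_binomial_pmf_eq) (simp_all add: distr_bd_est[OF bd] distr_bd_est[OF bd'])
  then show "k = k'"
    using assms(1,3) unfolding bd_offset_div_slope[OF bd assms(3)] bd_offset_div_slope[OF bd' assms(3)]
    by simp
qed

end
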